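(* Let $G = K_2 \otimes K_n$. If $n = 2$, then $G$ is disconnected. If $n \geq 3$, then $\dim(G) = n-1$.
   Context: $K_r$ is the complete graph on $r$ vertices. The tensor product $G\otimes H$ has vertex set $V(G)\times V(H)$, with $(u,v)$ adjacent to $(x,y)$ iff $ux\in E(G)$ and $vy\in E(H)$. For a connected graph and an ordered set $W=\{w_1,\dots,w_k\}$ of vertices, $r(v\mid W)=(d(v,w_1),\dots,d(v,w_k))$; $W$ is resolving if distinct vertices have distinct representations; $\dim(G)$ is the minimum size of a resolving set. *)

theory Defs
  imports Main
begin

type_synonym 'a graph = "'a set \<times> ('a \<Rightarrow> 'a \<Rightarrow> bool)"

definition verts :: "'a graph \<Rightarrow> 'a set" where "verts G = fst G"
definition adj :: "'a graph \<Rightarrow> 'a \<Rightarrow> 'a \<Rightarrow> bool" where "adj G = snd G"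

definition complete_graph :: "nat \<Rightarrow> nat graph" where
  "complete_graph r = ({..<r}, \<lambda>i j. i \<noteq> j)"

definition tensor_product :: "'a graph \<Rightarrow> 'b graph \<Rightarrow> ('a \<times> 'b) graph" where
  "tensor_product G H = (verts G \<times> verts H,
     \<lambda>(u, v) (x, y). adj G u x \<and> adj H v y)"

definition is_walk :: "'a graph \<Rightarrow> 'a list \<Rightarrow> bool" where
  "is_walk G xs \<longleftrightarrow> xs \<noteq> [] \<and> set xs \<subseteq> verts G \<and>
     (\<forall>i. Suc i < length xs \<longrightarrow> adj G (xs ! i) (xs ! Suc i))"

definition connected_graph :: "'a graph \<Rightarrow> bool" where
  "connected_graph G \<longleftrightarrow> verts G \<noteq> {} \<and>
     (\<forall>u\<in>verts G. \<forall>v\<in>verts G. \<exists>xs. is_walk G xs \<and> hd xs = u \<and> last xs = v)"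

definition gdist :: "'a graph \<Rightarrow> 'a \<Rightarrow> 'a \<Rightarrow> nat" where
  "gdist G u v = (LEAST k. \<exists>xs. is_walk G xs \<and> hd xs = u \<and> last xs = v \<and> length xs = Suc k)"

text \<open>W resolves G: distinct vertices have distinct distance vectors to W.
  (For an ordered set W = {w1,...,wk}, r(v|W) = r(u|W) iff d(v,w) = d(u,w) for all w in W.)\<close>
definition resolving_set :: "'a graph \<Rightarrow> 'a set \<Rightarrow> bool" where
  "resolving_set G W \<longleftrightarrow> W \<subseteq> verts G \<and>
     (\<forall>u\<in>verts G. \<forall>v\<in>verts G. (\<forall>w\<in>W. gdist G u w = gdist G v w) \<longrightarrow> u = v)"

definition metric_dim :: "'a graph \<Rightarrow> nat" where
  "metric_dim G = (LEAST k. \<exists>W. finite W \<and> card W = k \<and> resolving_set G W)"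

end

theory Submission
  imports Defs
begin

text \<open>In \<open>K\<^sub>2 \<otimes> K\<^sub>n\<close> two vertices are at distance 0, 1, 2 or 3 according to whether they
  agree in both coordinates, in neither, only in the first, or only in the second. For \<open>n = 2\<close>
  the parity of the coordinate sum is invariant along edges, so the graph is disconnected.
  For \<open>n \<ge> 3\<close> the vertices \<open>(0, j)\<close> and \<open>(0, k)\<close> have the same distance to every vertex
  outside the columns \<open>j\<close> and \<open>k\<close>, so a resolving set meets all columns but at most one;
  conversely \<open>{0} \<times> {0..<n-1}\<close> resolves, since the distance to \<open>(0, 0)\<close> is even exactly
  on row 0 and the distance to \<open>(0, k)\<close> is 0 or 3 exactly on column \<open>k\<close>.\<close>

lemma is_walk_singleton [simp]: "is_walk G [x] \<longleftrightarrow> x \<in> verts G"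
  by (simp add: is_walk_def)

lemma is_walk_Cons_hd: "is_walk G (x # xs) \<Longrightarrow> x \<in> verts G"
  by (simp add: is_walk_def)

lemma is_walk_Cons_Cons [simp]:
  "is_walk G (x # y # xs) \<longleftrightarrow> x \<in> verts G \<and> adj G x y \<and> is_walk G (y # xs)"
  unfolding is_walk_def by (auto simp: less_Suc_eq_0_disj)

lemma walk_length_ge_2:
  assumes "is_walk G xs" "hd xs \<noteq> last xs"
  shows "2 \<le> length xs"
proof -
  have "length xs \<noteq> 0" using assms(1) by (simp add: is_walk_def)
  moreover have "length xs \<noteq> 1" using assms(2) by (auto simp: length_Suc_conv)
  ultimately show ?thesis by linarith
qed

lemma walk_length_ge_3:
  assumes "is_walk G xs" "hd xs \<noteq> last xs" "\<not> adj G (hd xs) (last xs)"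
  shows "3 \<le> length xs"
proof -
  have "length xs \<noteq> 2"
    using assms by (auto simp: numeral_2_eq_2 length_Suc_conv)
  with walk_length_ge_2[OF assms(1,2)] show ?thesis by linarith
qed

lemma walk_length_ge_4:
  assumes "is_walk G xs" "hd xs \<noteq> last xs" "\<not> adj G (hd xs) (last xs)"
    and "\<not> (\<exists>w\<in>verts G. adj G (hd xs) w \<and> adj G w (last xs))"
  shows "4 \<le> length xs"
proof -
  have "length xs \<noteq> 3"
    using assms by (auto simp: numeral_3_eq_3 length_Suc_conv)
  with walk_length_ge_3[OF assms(1-3)] show ?thesis by linarith
qed

lemma walk_invariant:
  assumes "\<And>x y. x \<in> verts G \<Longrightarrow> y \<in> verts G \<Longrightarrow> adj G x y \<Longrightarrow> f x = f y"
    and "is_walk G xs"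
  shows "f (hd xs) = f (last xs)"
  using assms(2)
proof (induction xs rule: induct_list012)
  case (3 x y zs)
  then show ?case using assms(1) is_walk_Cons_hd[of G y zs] by auto
qed (auto simp: is_walk_def)

lemma not_connected_by_invariant:
  assumes "\<And>x y. x \<in> verts G \<Longrightarrow> y \<in> verts G \<Longrightarrow> adj G x y \<Longrightarrow> f x = f y"
    and "u \<in> verts G" "v \<in> verts G" "f u \<noteq> f v"
  shows "\<not> connected_graph G"
proof
  assume "connected_graph G"
  then obtain xs where xs: "is_walk G xs" "hd xs = u" "last xs = v"
    using assms(2,3) unfolding connected_graph_def by blast
  have "f (hd xs) = f (last xs)" using assms(1) xs(1) by (rule walk_invariant)
  then show False using xs(2,3) assms(4) by simp
qed

lemma gdist_eqI:
  assumes "is_walk G xs" "hd xs = u" "last xs = v" "length xs = Suc d"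
    and "\<And>ys. is_walk G ys \<Longrightarrow> hd ys = u \<Longrightarrow> last ys = v \<Longrightarrow> Suc d \<le> length ys"
  shows "gdist G u v = d"
  unfolding gdist_def using assms by (intro Least_equality) (blast, fastforce)

lemma gdist_self: "u \<in> verts G \<Longrightarrow> gdist G u u = 0"
  by (rule gdist_eqI[of G "[u]"]) (auto simp: is_walk_def Suc_le_eq)

lemma gdist_adjacent:
  assumes "u \<in> verts G" "v \<in> verts G" "adj G u v" "u \<noteq> v"
  shows "gdist G u v = 1"
  using assms walk_length_ge_2 by (intro gdist_eqI[of G "[u, v]"]) fastforce+

lemma gdist_common_neighbour:
  assumes "u \<in> verts G" "w \<in> verts G" "v \<in> verts G" "adj G u w" "adj G w v"
    and "u \<noteq> v" "\<not> adj G u v"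
  shows "gdist G u v = 2"
  using assms walk_length_ge_3 by (intro gdist_eqI[of G "[u, w, v]"]) fastforce+

lemma gdist_walk3_no_common_neighbour:
  assumes "is_walk G [u, x, y, v]" "u \<noteq> v" "\<not> adj G u v"
    and "\<not> (\<exists>w\<in>verts G. adj G u w \<and> adj G w v)"
  shows "gdist G u v = 3"
  using assms walk_length_ge_4 by (intro gdist_eqI[of G "[u, x, y, v]"]) fastforce+

lemma metric_dim_eqI:
  assumes "finite W" "resolving_set G W" "card W = k"
    and "\<And>W'. finite W' \<Longrightarrow> resolving_set G W' \<Longrightarrow> k \<le> card W'"
  shows "metric_dim G = k"
  unfolding metric_dim_def using assms by (intro Least_equality) blast+

abbreviation crown_graph :: "nat \<Rightarrow> (nat \<times> nat) graph" where
  "crown_graph n \<equiv> tensor_product (complete_graph 2) (complete_graph n)"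

lemma verts_crown_graph [simp]: "verts (crown_graph n) = {..<2} \<times> {..<n}"
  by (simp add: tensor_product_def complete_graph_def verts_def)

lemma adj_crown_graph [simp]: "adj (crown_graph n) (a, i) (b, j) \<longleftrightarrow> a \<noteq> b \<and> i \<noteq> j"
  by (simp add: tensor_product_def complete_graph_def adj_def)

lemma crown_graph_2_not_connected: "\<not> connected_graph (crown_graph 2)"
proof (rule not_connected_by_invariant
    [where f = "\<lambda>(a, i). even (a + i)" and u = "(0, 0)" and v = "(0, 1)"])
  fix x y
  assume "x \<in> verts (crown_graph 2)" "y \<in> verts (crown_graph 2)" "adj (crown_graph 2) x y"
  moreover obtain a i b j where "x = (a, i)" "y = (b, j)" by fastforce
  ultimately have "a < 2" "i < 2" "b < 2" "j < 2" "a \<noteq> b" "i \<noteq> j" by auto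
  then have "even (a + i) \<longleftrightarrow> even (b + j)" by presburger
  then show "(\<lambda>(a, i). even (a + i)) x = (\<lambda>(a, i). even (a + i)) y"
    using \<open>x = (a, i)\<close> \<open>y = (b, j)\<close> by simp
qed simp_all

fun crown_dist :: "nat \<times> nat \<Rightarrow> nat \<times> nat \<Rightarrow> nat" where
  "crown_dist (a, i) (b, j) =
     (if i = j then (if a = b then 0 else 3) else (if a = b then 2 else 1))"

lemma ex_less_neq2: "3 \<le> (n::nat) \<Longrightarrow> \<exists>k<n. k \<noteq> i \<and> k \<noteq> j"
  by presburger

lemma gdist_crown_graph:
  assumes n: "3 \<le> n" and "u \<in> verts (crown_graph n)" "v \<in> verts (crown_graph n)"
  shows "gdist (crown_graph n) u v = crown_dist u v"
proof -
  obtain a i b j where u: "u = (a, i)" and v: "v = (b, j)" by fastforce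
  have a: "a < 2" "i < n" and b: "b < 2" "j < n" using assms u v by auto
  consider "a = b" "i = j" | "a \<noteq> b" "i \<noteq> j" | "a = b" "i \<noteq> j" | "a \<noteq> b" "i = j"
    by blast
  then show ?thesis
  proof cases
    case 1
    then show ?thesis using a gdist_self[of "(a, i)" "crown_graph n"] unfolding u v by simp
  next
    case 2
    then show ?thesis using a b gdist_adjacent[of "(a, i)" "crown_graph n" "(b, j)"]
      unfolding u v by simp
  next
    case 3
    obtain k where "k < n" "k \<noteq> i" "k \<noteq> j" using ex_less_neq2[OF n] by blast
    with 3 a b show ?thesis
      unfolding u v
      by (subst gdist_common_neighbour[where w = "(1 - a, k)"]) (auto simp: less_2_cases_iff)
  next
    case 4
    obtain j' where "j' < n" "j' \<noteq> i" using ex_less_neq2[OF n] by blast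
    moreover obtain k where "k < n" "k \<noteq> i" "k \<noteq> j'" using ex_less_neq2[OF n] by blast
    moreover have
      "\<not> (\<exists>w\<in>verts (crown_graph n). adj (crown_graph n) u w \<and> adj (crown_graph n) w v)"
      using 4 a b unfolding u v by (auto simp: less_2_cases_iff)
    ultimately show ?thesis
      using 4 a b unfolding u v
      by (subst gdist_walk3_no_common_neighbour[where x = "(b, j')" and y = "(a, k)"]) auto
  qed
qed

lemma crown_dist_same_column_iff: "crown_dist (a, i) (c, k) \<in> {0, 3} \<longleftrightarrow> i = k"
  by simp

lemma even_crown_dist_iff: "even (crown_dist (a, i) (c, k)) \<longleftrightarrow> a = c"
  by simp

lemma resolving_set_crown_graph:
  assumes n: "3 \<le> n"
  shows "resolving_set (crown_graph n) ({0} \<times> {..<n - 1})"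
  unfolding resolving_set_def
proof (intro conjI ballI impI)
  show "{0} \<times> {..<n - 1} \<subseteq> verts (crown_graph n)" by auto
next
  fix u v assume u: "u \<in> verts (crown_graph n)" and v: "v \<in> verts (crown_graph n)"
    and eq: "\<forall>w\<in>{0} \<times> {..<n - 1}. gdist (crown_graph n) u w = gdist (crown_graph n) v w"
  obtain a i b j where uv: "u = (a, i)" "v = (b, j)" by fastforce
  have ab: "a < 2" "b < 2" and ij: "i < n" "j < n" using u v uv by auto
  have dist_eq: "crown_dist (a, i) (0, k) = crown_dist (b, j) (0, k)" if "k < n - 1" for k
    using eq that gdist_crown_graph[OF n u, of "(0, k)"] gdist_crown_graph[OF n v, of "(0, k)"]
    unfolding uv by auto
  have "a = 0 \<longleftrightarrow> b = 0"
    using dist_eq[of 0] n even_crown_dist_iff[of a i 0 0] even_crown_dist_iff[of b j 0 0] by simp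
  then have "a = b" using ab by linarith
  moreover have "i = j"
  proof (rule ccontr)
    assume "i \<noteq> j"
    then obtain k where "k < n - 1" "k \<in> {i, j}" using ij by (cases "i < n - 1") auto
    moreover have "i = k \<longleftrightarrow> j = k" if "k < n - 1" for k
      using dist_eq[OF that]
        crown_dist_same_column_iff[of a i 0 k] crown_dist_same_column_iff[of b j 0 k]
      by argo
    ultimately show False using \<open>i \<noteq> j\<close> by blast
  qed
  ultimately show "u = v" using uv by simp
qed

lemma resolving_set_crown_graph_misses_one_column:
  assumes n: "3 \<le> n" and W: "resolving_set (crown_graph n) W"
    and "j < n" "k < n" "j \<notin> snd ` W" "k \<notin> snd ` W"
  shows "j = k"
proof -
  have "W \<subseteq> verts (crown_graph n)" using W by (simp add: resolving_set_def)
  then have "gdist (crown_graph n) (0, j) w = gdist (crown_graph n) (0, k) w" if "w \<in> W" for w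
    using that assms gdist_crown_graph[OF n, of "(0, j)" w] gdist_crown_graph[OF n, of "(0, k)" w]
    by (cases w) force
  moreover have "(0, j) \<in> verts (crown_graph n)" "(0, k) \<in> verts (crown_graph n)"
    using assms(3,4) by auto
  ultimately have "(0::nat, j) = (0, k)" using W unfolding resolving_set_def by blast
  then show ?thesis by simp
qed

lemma card_resolving_set_crown_graph:
  assumes n: "3 \<le> n" and "finite W" and W: "resolving_set (crown_graph n) W"
  shows "n - 1 \<le> card W"
proof -
  have "card ({..<n} - snd ` W) \<le> 1"
    using resolving_set_crown_graph_misses_one_column[OF n W]
    by (auto simp: card_le_Suc0_iff_eq)
  moreover have "n \<le> card (snd ` W) + card ({..<n} - snd ` W)"
  proof -
    have "n = card {..<n}" by simp
    also have "\<dots> \<le> card (snd ` W \<union> ({..<n} - snd ` W))"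
      using \<open>finite W\<close> by (intro card_mono) auto
    also have "\<dots> \<le> card (snd ` W) + card ({..<n} - snd ` W)" by (rule card_Un_le)
    finally show ?thesis .
  qed
  moreover have "card (snd ` W) \<le> card W" using \<open>finite W\<close> by (rule card_image_le)
  ultimately show ?thesis by linarith
qed

theorem proposition3p2:
  fixes n :: nat
  shows "(n = 2 \<longrightarrow> \<not> connected_graph (tensor_product (complete_graph 2) (complete_graph n)))
       \<and> (n \<ge> 3 \<longrightarrow> metric_dim (tensor_product (complete_graph 2) (complete_graph n)) = n - 1)"
proof (intro conjI impI)
  assume "n = 2"
  then show "\<not> connected_graph (crown_graph n)" using crown_graph_2_not_connected by simp
next
  assume n: "3 \<le> n"
  show "metric_dim (crown_graph n) = n - 1"
  proof (rule metric_dim_eqI)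
    show "resolving_set (crown_graph n) ({0} \<times> {..<n - 1})"
      using n by (rule resolving_set_crown_graph)
  qed (use card_resolving_set_crown_graph[OF n] in auto)
qed

end
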